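(* Let $P,Q$ be probability measures on $(\mathcal X,\mathcal F)$ with $P\ll Q$, let $\psi$ be an Orlicz function, and let $E\in\mathcal F$. Then for every $\gamma\in\mathbb R$, $$P(E)\le \gamma\,Q(E)+\frac{1}{\psi^{-1}(1/Q(E))}\cdot\Big\Vert\Big[\frac{\mathrm dP}{\mathrm dQ}-\gamma\Big]_+\Big\Vert^{A,Q}_{\psi^\star}.$$
   Context: An Orlicz function is a convex $\psi:[0,\infty)\to[0,\infty]$ with $\psi(0)=0$ that is not identically $0$ or identically $\infty$ on $(0,\infty)$. Its conjugate is $\psi^\star(t):=\sup_{\lambda>0}(\lambda t-\psi(\lambda))$, and its generalized inverse is $\psi^{-1}(s):=\inf\{t\ge0:\psi(t)\ge s\}$ for $s\ge0$, with conventions $1/0=\infty$, $\psi^{-1}(\infty)=\infty$, $1/\infty=0$. For a probability measure $\mu$ and measurable $U$, the Luxemburg norm is $\Vert U\Vert^\mu_\psi:=\inf\{\sigma>0:\mathbf E_\mu[\psi(|U|/\sigma)]\le1\}$ and the Amemiya norm is $\Vert U\Vert^{A,\mu}_\psi:=\inf\{(\mathbf E_\mu[\psi(t|U|)]+1)/t:\ t>0\}$. $[x]_+:=\max\{x,0\}$. *)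

theory Defs
  imports "HOL-Probability.Probability"
begin

text \<open>Orlicz functions are modelled as functions real => ennreal; only their values
on [0,\<infinity>) matter.\<close>

definition orlicz :: "(real \<Rightarrow> ennreal) \<Rightarrow> bool" where
  "orlicz psi \<longleftrightarrow>
     psi 0 = 0 \<and>
     (\<forall>x y t. 0 \<le> x \<longrightarrow> 0 \<le> y \<longrightarrow> 0 \<le> t \<longrightarrow> t \<le> 1 \<longrightarrow>
        psi ((1 - t) * x + t * y) \<le> ennreal (1 - t) * psi x + ennreal t * psi y) \<and>
     \<not> (\<forall>t>0. psi t = 0) \<and>
     \<not> (\<forall>t>0. psi t = \<infinity>)"

definition orlicz_conj :: "(real \<Rightarrow> ennreal) \<Rightarrow> real \<Rightarrow> ennreal" where
  "orlicz_conj psi t = e2ennreal (SUP l\<in>{0<..}. ereal (l * t) - enn2ereal (psi l))"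

definition orlicz_inv :: "(real \<Rightarrow> ennreal) \<Rightarrow> ennreal \<Rightarrow> ennreal" where
  "orlicz_inv psi s =
     (if s = \<infinity> then \<infinity> else Inf {ennreal t | t. 0 \<le> t \<and> s \<le> psi t})"

definition amemiya_norm :: "(real \<Rightarrow> ennreal) \<Rightarrow> 'a measure \<Rightarrow> ('a \<Rightarrow> real) \<Rightarrow> ennreal" where
  "amemiya_norm psi mu U =
     (INF t\<in>{0<..}. ((\<integral>\<^sup>+ x. psi (t * \<bar>U x\<bar>) \<partial>mu) + 1) / ennreal t)"

end

theory Submission
  imports Defs
begin

text \<open>
Write \<open>g = [dP/dQ - \<gamma>]\<^sub>+\<close>. Since \<open>dP/dQ \<le> \<gamma> + g\<close>, we get \<open>P(E) \<le> \<gamma> Q(E) + \<integral>\<^sub>E g dQ\<close>,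
so it remains to bound \<open>\<integral>\<^sub>E g dQ\<close>. If \<open>0 < l < \<psi>\<^sup>-\<^sup>1(1/Q(E))\<close> then \<open>\<psi>(l) Q(E) \<le> 1\<close>, and
integrating Young's inequality \<open>l t g \<le> \<psi>(l) + \<psi>\<^sup>\<star>(t g)\<close> over \<open>E\<close> gives
\<open>l t \<integral>\<^sub>E g dQ \<le> 1 + \<integral> \<psi>\<^sup>\<star>(t g) dQ\<close> for every \<open>t > 0\<close>, i.e. \<open>l \<integral>\<^sub>E g dQ \<le> \<parallel>g\<parallel>\<^sup>A\<^sub>\<psi>\<^sub>\<star>\<close>.
Letting \<open>l\<close> increase to \<open>\<psi>\<^sup>-\<^sup>1(1/Q(E))\<close> yields the bound; this is Hoelder's inequality for
the Amemiya norm together with \<open>\<parallel>1\<^sub>E\<parallel>\<^sub>\<psi> = 1/\<psi>\<^sup>-\<^sup>1(1/Q(E))\<close>.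
\<close>

lemma fenchel_young_orlicz_conj:
  assumes "0 < l"
  shows "ennreal (l * u) - psi l \<le> orlicz_conj psi u"
proof (cases "psi l")
  case (real r)
  have "ereal (l * u) - enn2ereal (psi l) \<le> (SUP l\<in>{0<..}. ereal (l * u) - enn2ereal (psi l))"
    using assms by (intro SUP_upper) auto
  hence "e2ennreal (ereal (l * u - r)) \<le> orlicz_conj psi u"
    unfolding orlicz_conj_def using real by (intro e2ennreal_mono) auto
  moreover have "ennreal (l * u) - psi l = e2ennreal (ereal (l * u - r))"
    using real by (simp add: ennreal_minus)
  ultimately show ?thesis by simp
qed simp

lemma orlicz_scale_le:
  assumes "orlicz psi" "0 \<le> t" "t \<le> 1" "0 \<le> y"
  shows "psi (t * y) \<le> ennreal t * psi y"
proof -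
  have "psi ((1 - t) * 0 + t * y) \<le> ennreal (1 - t) * psi 0 + ennreal t * psi y"
    using assms unfolding orlicz_def by blast
  moreover have "psi 0 = 0" using assms unfolding orlicz_def by blast
  ultimately show ?thesis by simp
qed

lemma orlicz_scale_ge:
  assumes psi: "orlicz psi" and N: "1 \<le> N" and y: "0 \<le> y"
  shows "ennreal N * psi y \<le> psi (N * y)"
proof -
  have "psi y = psi (1 / N * (N * y))" using N by simp
  also have "\<dots> \<le> ennreal (1 / N) * psi (N * y)"
    using N y by (intro orlicz_scale_le[OF psi]) auto
  finally have "ennreal N * psi y \<le> ennreal N * ennreal (1 / N) * psi (N * y)"
    by (simp add: mult.assoc mult_left_mono)
  also have "ennreal N * ennreal (1 / N) = 1"
    using N by (simp flip: ennreal_mult)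
  finally show ?thesis by simp
qed

lemma orlicz_inv_le:
  assumes "s \<noteq> \<infinity>" "0 \<le> t" "s \<le> psi t"
  shows "orlicz_inv psi s \<le> ennreal t"
  using assms unfolding orlicz_inv_def by (auto intro!: Inf_lower)

lemma less_orlicz_invD:
  assumes "s \<noteq> \<infinity>" "0 \<le> l" "ennreal l < orlicz_inv psi s"
  shows "psi l < s"
  using orlicz_inv_le[of s l psi] assms by (meson leD not_le)

lemma le_orlicz_inv:
  assumes "s \<noteq> \<infinity>" "\<And>t. 0 \<le> t \<Longrightarrow> s \<le> psi t \<Longrightarrow> b \<le> t"
  shows "ennreal b \<le> orlicz_inv psi s"
  using assms unfolding orlicz_inv_def by (auto intro!: Inf_greatest ennreal_leI)

lemma orlicz_inv_pos:
  assumes psi: "orlicz psi" and s: "0 < s"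
  shows "0 < orlicz_inv psi s"
proof (cases "s = \<infinity>")
  case False
  with s obtain c where c: "s = ennreal c" "0 < c" by (cases s) auto
  obtain a where a: "0 < a" "psi a \<noteq> \<infinity>" using psi unfolding orlicz_def by auto
  then obtain r where r: "psi a = ennreal r" "0 \<le> r" by (cases "psi a") auto
  \<comment> \<open>below \<open>b\<close>, convexity gives \<open>\<psi>(t) \<le> (t/a) \<psi>(a) < c\<close>\<close>
  define b where "b = a * c / (r + c)"
  have b: "0 < b" "b \<le> a" using a r c by (auto simp: b_def field_simps)
  have "ennreal b \<le> orlicz_inv psi s"
  proof (rule le_orlicz_inv[OF False])
    fix t assume t: "0 \<le> t" "s \<le> psi t"
    show "b \<le> t"
    proof (rule ccontr)
      assume "\<not> b \<le> t"
      hence tb: "t < b" by simp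
      have "psi t = psi (t / a * a)" using a by simp
      also have "\<dots> \<le> ennreal (t / a) * psi a"
        using a b tb t by (intro orlicz_scale_le[OF psi]) auto
      also have "\<dots> = ennreal (t / a * r)"
        using r t a by (simp only: r(1) ennreal_mult'')
      also have "\<dots> < s"
      proof -
        have "t / a * r \<le> b / a * r" using tb a r by (intro mult_right_mono divide_right_mono) auto
        also have "\<dots> = c * r / (r + c)" using a by (simp add: b_def)
        also have "\<dots> < c" using c r by (simp add: field_simps)
        finally show ?thesis using c by (simp add: ennreal_lessI)
      qed
      finally show False using t by simp
    qed
  qed
  with b show ?thesis by (metis ennreal_less_zero_iff order_less_le_trans)
qed (simp add: orlicz_inv_def)

lemma orlicz_inv_finite:
  assumes psi: "orlicz psi" and s: "s \<noteq> \<infinity>"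
  shows "orlicz_inv psi s < \<infinity>"
proof -
  obtain a where a: "0 < a" "psi a \<noteq> 0" using psi unfolding orlicz_def by auto
  obtain t where "0 \<le> t" "s \<le> psi t"
  proof (cases "psi a")
    case (real r)
    obtain c where c: "s = ennreal c" "0 \<le> c" using s by (cases s) auto
    define N where "N = max 1 (c / r)"
    have N: "1 \<le> N" "c \<le> N * r"
      using real a by (auto simp: N_def max_def field_simps)
    have "s \<le> ennreal N * psi a" using N real c by (simp flip: ennreal_mult)
    also have "\<dots> \<le> psi (N * a)" using N a by (intro orlicz_scale_ge[OF psi]) auto
    finally have "s \<le> psi (N * a)" .
    then show ?thesis using a N by (intro that[of "N * a"]) auto
  next
    case top
    with a show ?thesis by (intro that[of a]) auto
  qed
  then have "orlicz_inv psi s \<le> ennreal t" by (rule orlicz_inv_le[OF s])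
  then show ?thesis by (metis ennreal_less_top infinity_ennreal_def order_le_less_trans)
qed

lemma ennreal_mult_le_of_forall_less:
  fixes G A :: ennreal
  assumes s: "0 < s" and le: "\<And>l. 0 < l \<Longrightarrow> l < s \<Longrightarrow> ennreal l * G \<le> A"
  shows "ennreal s * G \<le> A"
proof -
  have "(SUP l\<in>{0<..<s}. ennreal l) \<le> ennreal s"
    by (auto intro!: SUP_least)
  hence "(SUP l\<in>{0<..<s}. ennreal l) \<noteq> \<infinity>"
    unfolding infinity_ennreal_def by (rule neq_top_trans[OF ennreal_neq_top])
  hence "ennreal (Sup {0<..<s}) = (SUP l\<in>{0<..<s}. ennreal l)"
    using s by (intro ennreal_Sup) auto
  hence "ennreal s = (SUP l\<in>{0<..<s}. ennreal l)"
    using s by simp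
  hence "ennreal s * G = (SUP l\<in>{0<..<s}. ennreal l * G)"
    by (simp add: SUP_mult_right_ennreal)
  also have "\<dots> \<le> A" using le by (auto intro!: SUP_least)
  finally show ?thesis .
qed

lemma mult_set_nn_integral_le_amemiya_norm_conj:
  assumes l: "0 < l" and psil: "psi l * emeasure Q E \<le> 1"
    and E[measurable]: "E \<in> sets Q" and g[measurable]: "g \<in> borel_measurable Q"
  shows "ennreal l * (\<integral>\<^sup>+x\<in>E. ennreal \<bar>g x\<bar> \<partial>Q) \<le> amemiya_norm (orlicz_conj psi) Q g"
  unfolding amemiya_norm_def
proof (rule INF_greatest)
  fix t :: real assume "t \<in> {0<..}"
  hence t: "0 < t" by simp
  let ?G = "\<integral>\<^sup>+x\<in>E. ennreal \<bar>g x\<bar> \<partial>Q"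
  let ?u = "\<lambda>x. ennreal (l * (t * \<bar>g x\<bar>))"
  have "ennreal l * ?G * ennreal t = (\<integral>\<^sup>+x\<in>E. ?u x \<partial>Q)"
    using t l by (simp add: nn_integral_cmult[symmetric] ennreal_mult' mult_ac)
  also have "\<dots> \<le> (\<integral>\<^sup>+x. psi l * indicator E x + (?u x - psi l) \<partial>Q)"
    using ennreal_minus_le_iff by (intro nn_integral_mono) (auto split: split_indicator)
  also have "\<dots> = psi l * emeasure Q E + (\<integral>\<^sup>+x. ?u x - psi l \<partial>Q)"
    by (simp add: nn_integral_add nn_integral_cmult_indicator)
  also have "\<dots> \<le> 1 + (\<integral>\<^sup>+x. orlicz_conj psi (t * \<bar>g x\<bar>) \<partial>Q)"
    using psil fenchel_young_orlicz_conj[OF l] by (intro add_mono nn_integral_mono) (auto simp: mult.assoc)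
  finally have "ennreal l * ?G * ennreal t / ennreal t
      \<le> ((\<integral>\<^sup>+x. orlicz_conj psi (t * \<bar>g x\<bar>) \<partial>Q) + 1) / ennreal t"
    by (intro divide_right_mono_ennreal) (simp add: add.commute)
  then show "ennreal l * ?G \<le> ((\<integral>\<^sup>+x. orlicz_conj psi (t * \<bar>g x\<bar>) \<partial>Q) + 1) / ennreal t"
    using t by (simp add: mult_divide_eq_ennreal)
qed

lemma set_nn_integral_le_amemiya_norm_conj:
  assumes psi: "orlicz psi" and E: "E \<in> sets Q" and fin: "emeasure Q E \<noteq> \<infinity>"
    and g: "g \<in> borel_measurable Q"
  shows "(\<integral>\<^sup>+x\<in>E. ennreal \<bar>g x\<bar> \<partial>Q)
    \<le> 1 / orlicz_inv psi (1 / emeasure Q E) * amemiya_norm (orlicz_conj psi) Q g"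
proof -
  let ?G = "\<integral>\<^sup>+x\<in>E. ennreal \<bar>g x\<bar> \<partial>Q" and ?A = "amemiya_norm (orlicz_conj psi) Q g"
  show ?thesis
  proof (cases "emeasure Q E = 0")
    case True
    then have "E \<in> null_sets Q" using E by (simp add: null_sets_def)
    then have "?G = 0" by (rule nn_integral_null_set)
    then show ?thesis by simp
  next
    case False
    obtain q where q: "emeasure Q E = ennreal q" "0 < q"
      using False fin by (cases "emeasure Q E") auto
    have inv_q: "1 / emeasure Q E = ennreal (1 / q)"
      using q divide_ennreal[of 1 q] by simp
    have "0 < orlicz_inv psi (ennreal (1 / q))"
      using q by (intro orlicz_inv_pos[OF psi]) simp
    moreover have "orlicz_inv psi (ennreal (1 / q)) < \<infinity>"
      by (rule orlicz_inv_finite[OF psi]) simp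
    ultimately obtain s where s: "orlicz_inv psi (ennreal (1 / q)) = ennreal s" "0 < s"
      by (cases "orlicz_inv psi (ennreal (1 / q))") auto
    have "ennreal s * ?G \<le> ?A"
    proof (rule ennreal_mult_le_of_forall_less[OF s(2)])
      fix l assume l: "0 < l" "l < s"
      have "psi l < ennreal (1 / q)"
        by (rule less_orlicz_invD) (use l s in \<open>auto simp: ennreal_lessI\<close>)
      hence "psi l * ennreal q \<le> ennreal (1 / q) * ennreal q"
        by (intro mult_right_mono) auto
      also have "\<dots> = 1" using q by (simp flip: ennreal_mult)
      finally show "ennreal l * ?G \<le> ?A"
        using q by (intro mult_set_nn_integral_le_amemiya_norm_conj[OF l(1) _ E g]) simp
    qed
    have "?G = (1 / ennreal s * ennreal s) * ?G"
      using s by (simp add: ennreal_divide_times)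
    also have "\<dots> = 1 / ennreal s * (ennreal s * ?G)"
      by (simp only: mult.assoc)
    also have "\<dots> \<le> 1 / ennreal s * ?A"
      by (rule mult_left_mono) (fact, simp)
    finally show ?thesis
      unfolding inv_q s(1) .
  qed
qed

lemma set_nn_integral_le_plus_pos_part:
  fixes f :: "'a \<Rightarrow> real" and \<gamma> :: real
  assumes E[measurable]: "E \<in> sets Q" and fin: "emeasure Q E \<noteq> \<infinity>"
    and f[measurable]: "f \<in> borel_measurable Q" and nonneg: "\<And>x. 0 \<le> f x"
  shows "enn2ereal (\<integral>\<^sup>+x\<in>E. ennreal (f x) \<partial>Q)
    \<le> ereal (\<gamma> * measure Q E) + enn2ereal (\<integral>\<^sup>+x\<in>E. ennreal (max (f x - \<gamma>) 0) \<partial>Q)"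
    (is "enn2ereal ?F \<le> _ + enn2ereal ?G")
proof -
  have eQ: "emeasure Q E = ennreal (measure Q E)"
    using fin by (simp add: emeasure_eq_ennreal_measure)
  show ?thesis
  proof (cases "0 \<le> \<gamma>")
    case True
    have "ennreal (f x) \<le> ennreal \<gamma> + ennreal (max (f x - \<gamma>) 0)" for x
    proof -
      have "ennreal (f x) \<le> ennreal (\<gamma> + max (f x - \<gamma>) 0)" by (intro ennreal_leI) simp
      also have "\<dots> = ennreal \<gamma> + ennreal (max (f x - \<gamma>) 0)" using True by (intro ennreal_plus) auto
      finally show ?thesis .
    qed
    then have "?F \<le> (\<integral>\<^sup>+x. ennreal \<gamma> * indicator E x + ennreal (max (f x - \<gamma>) 0) * indicator E x \<partial>Q)"
      by (intro nn_integral_mono) (auto split: split_indicator)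
    also have "\<dots> = ennreal (\<gamma> * measure Q E) + ?G"
      using True by (simp add: nn_integral_add nn_integral_cmult_indicator eQ ennreal_mult)
    finally show ?thesis
      using True by (simp add: less_eq_ennreal.rep_eq plus_ennreal.rep_eq)
  next
    case False
    have "?G = (\<integral>\<^sup>+x. ennreal (f x) * indicator E x + ennreal (- \<gamma>) * indicator E x \<partial>Q)"
      using False nonneg by (intro nn_integral_cong) (auto split: split_indicator simp flip: ennreal_plus)
    also have "\<dots> = ?F + ennreal (- \<gamma> * measure Q E)"
      using False by (simp add: nn_integral_add nn_integral_cmult_indicator eQ flip: ennreal_mult'')
    moreover have "0 \<le> - \<gamma> * measure Q E"
      using False by (simp add: mult_nonpos_nonneg)
    ultimately have "enn2ereal ?G = enn2ereal ?F + ereal (- \<gamma> * measure Q E)"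
      by (simp add: plus_ennreal.rep_eq)
    then show ?thesis by (cases "enn2ereal ?F") auto
  qed
qed

lemma (in sigma_finite_measure) emeasure_eq_set_nn_integral_RN_deriv:
  assumes N: "sigma_finite_measure N" and ac: "absolutely_continuous M N" "sets N = sets M"
    and A: "A \<in> sets M"
  shows "emeasure N A = (\<integral>\<^sup>+x\<in>A. ennreal (enn2real (RN_deriv M N x)) \<partial>M)"
proof -
  have "emeasure N A = emeasure (density M (RN_deriv M N)) A"
    using density_RN_deriv[OF ac] by simp
  also have "\<dots> = (\<integral>\<^sup>+x\<in>A. RN_deriv M N x \<partial>M)"
    using A by (intro emeasure_density) auto
  also have "\<dots> = (\<integral>\<^sup>+x\<in>A. ennreal (enn2real (RN_deriv M N x)) \<partial>M)"
    using RN_deriv_finite[OF N ac]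
    by (intro nn_integral_cong_AE) (auto elim!: eventually_mono simp: ennreal_enn2real_if less_top)
  finally show ?thesis .
qed

theorem theorem2:
  fixes P Q :: "'a measure" and psi :: "real \<Rightarrow> ennreal" and E :: "'a set" and \<gamma> :: real
  assumes "prob_space P" and "prob_space Q" and "sets P = sets Q"
    and "absolutely_continuous Q P"
    and "orlicz psi"
    and "E \<in> sets Q"
  shows "ereal (measure P E) \<le>
           ereal (\<gamma> * measure Q E)
           + enn2ereal ((1 / orlicz_inv psi (1 / emeasure Q E))
               * amemiya_norm (orlicz_conj psi) Q
                   (\<lambda>x. max (enn2real (RN_deriv Q P x) - \<gamma>) 0))"
proof -
  interpret P: prob_space P by fact
  interpret Q: prob_space Q by fact
  define f where "f x = enn2real (RN_deriv Q P x)" for x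
  have f[measurable]: "f \<in> borel_measurable Q" unfolding f_def by measurable
  have "emeasure P E = (\<integral>\<^sup>+x\<in>E. ennreal (f x) \<partial>Q)"
    unfolding f_def using assms P.sigma_finite_measure_axioms
    by (intro Q.emeasure_eq_set_nn_integral_RN_deriv) auto
  then have "ereal (measure P E) = enn2ereal (\<integral>\<^sup>+x\<in>E. ennreal (f x) \<partial>Q)"
    by (metis P.emeasure_eq_measure enn2ereal_ennreal measure_nonneg)
  also have "\<dots> \<le> ereal (\<gamma> * measure Q E) + enn2ereal (\<integral>\<^sup>+x\<in>E. ennreal \<bar>max (f x - \<gamma>) 0\<bar> \<partial>Q)"
    using set_nn_integral_le_plus_pos_part[OF assms(6) _ f, of \<gamma>] by (simp add: f_def)
  also have "\<dots> \<le> ereal (\<gamma> * measure Q E) + enn2ereal ((1 / orlicz_inv psi (1 / emeasure Q E))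
      * amemiya_norm (orlicz_conj psi) Q (\<lambda>x. max (f x - \<gamma>) 0))"
  proof -
    have "(\<integral>\<^sup>+x\<in>E. ennreal \<bar>max (f x - \<gamma>) 0\<bar> \<partial>Q) \<le> (1 / orlicz_inv psi (1 / emeasure Q E))
        * amemiya_norm (orlicz_conj psi) Q (\<lambda>x. max (f x - \<gamma>) 0)"
      by (rule set_nn_integral_le_amemiya_norm_conj[OF assms(5,6)]) simp_all
    then show ?thesis by (intro add_left_mono) (simp add: less_eq_ennreal.rep_eq)
  qed
  finally show ?thesis unfolding f_def .
qed

end
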